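(* Let $\mu>0$ and consider the parametric multistage setting of the context. Assume that the noises $\mathbf{W}_1,\dots,\mathbf{W}_T$ are independent with finite supports and that there exists a compact set $\mathcal{P}\subset\mathbb{P}$ such that, for all $t\in\{0,\dots,T-1\}$ and all $w\in\mathrm{Supp}(\mathbf{W}_{t+1})$, $\mathrm{dom}\,L_t(x,u,w,\cdot)\subset\mathcal{P}$ for all $(x,u)\in\mathbb{X}\times\mathbb{U}$, and $\mathrm{dom}\,K(x,\cdot)\subset\mathcal{P}$ for all $x\in\mathbb{X}$. Then: 1. for all $t\in\{0,\dots,T-1\}$ and all $w\in\mathrm{Supp}(\mathbf{W}_{t+1})$, if $L_t(\cdot,\cdot,w,\cdot)\in\Gamma_{\mathcal{K}}[\mathbb{X}\times\mathbb{U},\mathbb{P}]$, then $L^\mu_t(\cdot,\cdot,w,\cdot)\in\Theta_{\mathcal{K}}[\mathbb{X}\times\mathbb{U},\mathbb{P}]$; 2. if $K\in\Gamma[\mathbb{X},\mathbb{P}]$, then $K^\mu\in\Theta[\mathbb{X},\mathbb{P}]$.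
   Context: $T\ge1$; $\mathbb{X}=\mathbb{R}^{n_x}$, $\mathbb{U}=\mathbb{R}^{n_u}$, $\mathbb{W}=\mathbb{R}^{n_w}$, $\mathbb{P}=\mathbb{R}^{n_p}$; $\mathbf{W}_1,\dots,\mathbf{W}_T$ are $\mathbb{W}$-valued random variables, $\mathrm{Supp}$ denotes the set of values taken with positive probability; $L_t:\mathbb{X}\times\mathbb{U}\times\mathbb{W}\times\mathbb{P}\to\,]-\infty,+\infty]$ ($t=0,\dots,T-1$) and $K:\mathbb{X}\times\mathbb{P}\to\,]-\infty,+\infty]$ are given cost functions; $\mathrm{dom}\,g=\{g<+\infty\}$. Parametric Moreau envelopes: $L^\mu_t(x,u,w,p)=\inf_{p'\in\mathbb{P}}\big(L_t(x,u,w,p')+\frac{1}{2\mu}\|p-p'\|_2^2\big)$ and $K^\mu(x,p)=\inf_{p'\in\mathbb{P}}\big(K(x,p')+\frac{1}{2\mu}\|p-p'\|_2^2\big)$. Function classes: for a Euclidean space $\mathbb{Y}$, $\Gamma[\mathbb{Y},\mathbb{P}]$ is the set of lower semicontinuous convex functions $\mathbb{Y}\times\mathbb{P}\to\,]-\infty,+\infty]$. For $\mathcal{Q}\subset\mathbb{P}$, $\Theta[\mathbb{Y},\mathcal{Q}]$ is the set of $\theta\in\Gamma[\mathbb{Y},\mathbb{P}]$ with $\mathrm{dom}\,\theta=Y_\theta\times\mathcal{Q}$ for some (possibly empty) $Y_\theta\subset\mathbb{Y}$ and such that $\theta(y,\cdot)$ is differentiable on $\mathrm{int}\,\mathcal{Q}$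 for each $y\in Y_\theta$. $\Gamma_{\mathcal{K}}[\mathbb{X}\times\mathbb{U},\mathbb{P}]$ is the set of $\gamma\in\Gamma[\mathbb{X}\times\mathbb{U},\mathbb{P}]$ for which some compact $\mathcal{K}_\gamma\subset\mathbb{U}$ satisfies $\mathrm{dom}\,\gamma(x,\cdot,p)\subset\mathcal{K}_\gamma$ for all $(x,p)$; $\Theta_{\mathcal{K}}[\mathbb{X}\times\mathbb{U},\mathcal{Q}]=\Theta[\mathbb{X}\times\mathbb{U},\mathcal{Q}]\cap\Gamma_{\mathcal{K}}[\mathbb{X}\times\mathbb{U},\mathbb{P}]$. *)

theory Defs
  imports "HOL-Analysis.Analysis" "HOL-Probability.Probability"
begin

definition edom :: "('a \<Rightarrow> ereal) \<Rightarrow> 'a set" where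
  "edom g = {z. g z < \<infinity>}"

definition lsc_fun :: "('a::topological_space \<Rightarrow> ereal) \<Rightarrow> bool" where
  "lsc_fun f \<longleftrightarrow> (\<forall>c::ereal. closed {z. f z \<le> c})"

definition convex_fun :: "('a::real_vector \<Rightarrow> ereal) \<Rightarrow> bool" where
  "convex_fun f \<longleftrightarrow> (\<forall>x y. \<forall>t::real. 0 \<le> t \<and> t \<le> 1 \<longrightarrow>
      f ((1 - t) *\<^sub>R x + t *\<^sub>R y) \<le> ereal (1 - t) * f x + ereal t * f y)"

definition Gamma_set :: "(('y::euclidean_space \<times> 'p::euclidean_space) \<Rightarrow> ereal) set" where
  "Gamma_set = {f. (\<forall>z. f z \<noteq> -\<infinity>) \<and> lsc_fun f \<and> convex_fun f}"

definition Theta_set :: "'p set \<Rightarrow> (('y::euclidean_space \<times> 'p::euclidean_space) \<Rightarrow> ereal) set" where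
  "Theta_set Q = {\<theta>. \<theta> \<in> Gamma_set \<and>
      (\<exists>Y\<theta>. edom \<theta> = Y\<theta> \<times> Q \<and>
         (\<forall>y\<in>Y\<theta>. \<forall>p\<in>interior Q. (\<lambda>q. real_of_ereal (\<theta> (y, q))) differentiable (at p)))}"

definition GammaK_set :: "((('x::euclidean_space \<times> 'u::euclidean_space) \<times> 'p::euclidean_space) \<Rightarrow> ereal) set" where
  "GammaK_set = {\<gamma>. \<gamma> \<in> Gamma_set \<and>
      (\<exists>K. compact K \<and> (\<forall>x p. {u. \<gamma> ((x, u), p) < \<infinity>} \<subseteq> K))}"

definition ThetaK_set :: "'p set \<Rightarrow> ((('x::euclidean_space \<times> 'u::euclidean_space) \<times> 'p::euclidean_space) \<Rightarrow> ereal) set" where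
  "ThetaK_set Q = Theta_set Q \<inter> GammaK_set"

definition moreau :: "real \<Rightarrow> ('p::euclidean_space \<Rightarrow> ereal) \<Rightarrow> 'p \<Rightarrow> ereal" where
  "moreau \<mu> f p = (INF p'. f p' + ereal ((norm (p - p'))\<^sup>2 / (2 * \<mu>)))"

definition Supp :: "'a measure \<Rightarrow> ('a \<Rightarrow> 'w) \<Rightarrow> 'w set" where
  "Supp M X = {w. measure M {\<omega> \<in> space M. X \<omega> = w} > 0}"

end

theory Submission
  imports Defs
begin

text \<open>
  For fixed \<open>y\<close>, the envelope \<open>p \<mapsto> inf\<^sub>q F(y,q) + |p - q|\<^sup>2/(2\<mu>)\<close> minimises a lower
  semicontinuous function whose domain lies in the compact set \<open>P\<close>, so the infimum is attained.
  Attainment makes the envelope jointly convex (partial minimisation of a jointly convex function)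
  and lower semicontinuous (its sublevel sets are projections, along the compact factor \<open>P\<close>, of
  closed sets). At a minimiser \<open>q\<close> the quadratic \<open>p' \<mapsto> F(y,q) + |p' - q|\<^sup>2/(2\<mu>)\<close> lies above
  the envelope and touches it at \<open>p\<close>; a convex function with such a touching quadratic majorant is
  differentiable there, with gradient \<open>(p - q)/\<mu>\<close>.
\<close>

lemma lsc_fun_iff_open_superlevel: "lsc_fun f \<longleftrightarrow> (\<forall>c. open {z. c < f z})"
proof -
  have "{z. c < f z} = - {z. f z \<le> c}" for c by auto
  then show ?thesis unfolding lsc_fun_def by (simp add: closed_def)
qed

lemma lsc_fun_comp_continuous:
  assumes "lsc_fun f" and "continuous_on UNIV g"
  shows "lsc_fun (\<lambda>x. f (g x))"
proof -
  have "closed (g -` {z. f z \<le> c})" for c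
    using assms by (intro closed_vimage) (auto simp: lsc_fun_def)
  then show ?thesis by (simp add: lsc_fun_def vimage_def)
qed

lemma lsc_fun_add_continuous:
  fixes f :: "'a::topological_space \<Rightarrow> ereal"
  assumes lsc: "lsc_fun f" and ninf: "\<And>x. f x \<noteq> -\<infinity>" and g: "continuous_on UNIV g"
  shows "lsc_fun (\<lambda>x. f x + ereal (g x))"
  unfolding lsc_fun_iff_open_superlevel
proof
  fix c :: ereal
  show "open {x. c < f x + ereal (g x)}"
  proof (cases c)
    case (real r)
    have "{x. c < f x + ereal (g x)} = (\<Union>a. {x. ereal a < f x} \<inter> {x. r - a < g x})"
    proof (intro set_eqI iffI)
      fix x assume x: "x \<in> {x. c < f x + ereal (g x)}"
      show "x \<in> (\<Union>a. {x. ereal a < f x} \<inter> {x. r - a < g x})"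
      proof (cases "f x")
        case (real b)
        then have "r < b + g x" using x \<open>c = ereal r\<close> by simp
        then show ?thesis using real by (intro UN_I[of "(b + r - g x) / 2"]) (auto simp: field_simps)
      next
        case PInf
        then show ?thesis by (intro UN_I[of "r - g x + 1"]) auto
      qed (use ninf in simp)
    next
      fix x assume "x \<in> (\<Union>a. {x. ereal a < f x} \<inter> {x. r - a < g x})"
      then show "x \<in> {x. c < f x + ereal (g x)}" using \<open>c = ereal r\<close> by (cases "f x") auto
    qed
    moreover have "open {x. r - a < g x}" for a
      using open_Collect_less[OF continuous_on_const g] by simp
    ultimately show ?thesis
      using lsc unfolding lsc_fun_iff_open_superlevel by (auto intro!: open_UN open_Int)
  next
    case MInf
    then have "{x. c < f x + ereal (g x)} = UNIV" using ninf by auto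
    then show ?thesis by simp
  qed simp
qed

lemma lsc_fun_attains_INF:
  fixes f :: "'a::topological_space \<Rightarrow> ereal"
  assumes lsc: "lsc_fun f" and S: "compact S" "S \<noteq> {}" and dom: "edom f \<subseteq> S"
  shows "\<exists>x\<in>S. (INF y. f y) = f x"
proof -
  have "\<exists>x\<in>S. \<forall>y\<in>S. f x \<le> f y"
  proof (rule ccontr)
    assume "\<not> ?thesis"
    then have "S \<subseteq> (\<Union>y\<in>S. {x. f y < f x})" by (auto simp: not_le)
    moreover have "open {x. f y < f x}" for y
      using lsc by (simp add: lsc_fun_iff_open_superlevel)
    ultimately obtain D where D: "D \<subseteq> S" "finite D" "S \<subseteq> (\<Union>y\<in>D. {x. f y < f x})"
      using compactE_image[OF S(1)] by metis
    with S(2) have "D \<noteq> {}" by auto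
    then have "Min (f ` D) \<in> f ` D" using D(2) by simp
    then obtain y0 where y0: "y0 \<in> D" "f y0 = Min (f ` D)" by auto
    then have "\<forall>y\<in>D. f y0 \<le> f y" using D(2) by simp
    moreover obtain y where "y \<in> D" "f y < f y0" using y0(1) D by blast
    ultimately show False by (auto simp: not_le[symmetric])
  qed
  then obtain x where x: "x \<in> S" "\<forall>y\<in>S. f x \<le> f y" by blast
  have "f y = \<infinity>" if "y \<notin> S" for y
    using dom that unfolding edom_def by auto
  then have "f x \<le> f y" for y
    using x by (cases "y \<in> S") auto
  then have "(INF y. f y) = f x" by (rule INF_eqI) blast+
  with x(1) show ?thesis by blast
qed

lemma lsc_fun_INF_attained:
  fixes H :: "('a::euclidean_space \<times> 'b::euclidean_space) \<Rightarrow> ereal"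
  assumes lsc: "lsc_fun H" and S: "compact S" and attains: "\<And>z. \<exists>q\<in>S. (INF q'. H (z, q')) = H (z, q)"
  shows "lsc_fun (\<lambda>z. INF q. H (z, q))"
  unfolding lsc_fun_def
proof
  fix c
  have "lsc_fun (\<lambda>w. H (snd w, fst w))"
    using lsc by (rule lsc_fun_comp_continuous) (intro continuous_intros)
  then have "closed {w. H (snd w, fst w) \<le> c}" by (simp add: lsc_fun_def)
  then have "closed {z. \<exists>q. q \<in> S \<and> (q, z) \<in> {w. H (snd w, fst w) \<le> c}}"
    using S by (rule closed_compact_projection[rotated])
  moreover have "{z. (INF q. H (z, q)) \<le> c} = {z. \<exists>q. q \<in> S \<and> (q, z) \<in> {w. H (snd w, fst w) \<le> c}}"
  proof (intro set_eqI iffI)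
    fix z assume "z \<in> {z. (INF q. H (z, q)) \<le> c}"
    moreover obtain q where "q \<in> S" "(INF q'. H (z, q')) = H (z, q)" using attains by blast
    ultimately show "z \<in> {z. \<exists>q. q \<in> S \<and> (q, z) \<in> {w. H (snd w, fst w) \<le> c}}"
      by (intro CollectI exI[of _ q]) simp
  next
    fix z assume "z \<in> {z. \<exists>q. q \<in> S \<and> (q, z) \<in> {w. H (snd w, fst w) \<le> c}}"
    then obtain q where "H (z, q) \<le> c" by auto
    then show "z \<in> {z. (INF q. H (z, q)) \<le> c}" by (meson INF_lower UNIV_I order_trans mem_Collect_eq)
  qed
  ultimately show "closed {z. (INF q. H (z, q)) \<le> c}" by simp
qed

lemma convex_funD:
  assumes "convex_fun f" and "0 \<le> t" and "t \<le> 1"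
  shows "f ((1 - t) *\<^sub>R x + t *\<^sub>R y) \<le> ereal (1 - t) * f x + ereal t * f y"
  using assms unfolding convex_fun_def by blast

lemma convex_fun_slice:
  assumes "convex_fun F"
  shows "convex_fun (\<lambda>q. F (y, q))"
  unfolding convex_fun_def
proof (intro allI impI)
  fix q1 q2 and t :: real
  assume "0 \<le> t \<and> t \<le> 1"
  then show "F (y, (1 - t) *\<^sub>R q1 + t *\<^sub>R q2) \<le> ereal (1 - t) * F (y, q1) + ereal t * F (y, q2)"
    using convex_funD[OF assms, of t "(y, q1)" "(y, q2)"] by (simp add: scaleR_collapse)
qed

lemma convex_fun_comp_linear:
  assumes "convex_fun f" and "linear g"
  shows "convex_fun (\<lambda>x. f (g x))"
  unfolding convex_fun_def
proof (intro allI impI)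
  fix x y and t :: real
  assume "0 \<le> t \<and> t \<le> 1"
  moreover have "g ((1 - t) *\<^sub>R x + t *\<^sub>R y) = (1 - t) *\<^sub>R g x + t *\<^sub>R g y"
    using assms(2) by (simp add: linear_add linear_scale)
  ultimately show "f (g ((1 - t) *\<^sub>R x + t *\<^sub>R y)) \<le> ereal (1 - t) * f (g x) + ereal t * f (g y)"
    using convex_funD[OF assms(1), of t "g x" "g y"] by simp
qed

lemma convex_fun_add_convex_on:
  fixes f :: "'a::real_vector \<Rightarrow> ereal"
  assumes f: "convex_fun f" and g: "convex_on UNIV g"
  shows "convex_fun (\<lambda>x. f x + ereal (g x))"
  unfolding convex_fun_def
proof (intro allI impI)
  fix x y :: 'a and t :: real
  assume t: "0 \<le> t \<and> t \<le> 1"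
  have distrib: "ereal c * (a + ereal b) = ereal c * a + ereal (c * b)" for c b and a :: ereal
    by (cases a) (simp_all add: distrib_left)
  let ?z = "(1 - t) *\<^sub>R x + t *\<^sub>R y"
  have "f ?z + ereal (g ?z) \<le> (ereal (1 - t) * f x + ereal t * f y) + ereal ((1 - t) * g x + t * g y)"
    using t convex_funD[OF f, of t x y] convex_onD[OF g, of t x y] by (intro add_mono) simp_all
  also have "\<dots> = (ereal (1 - t) * f x + ereal ((1 - t) * g x)) + (ereal t * f y + ereal (t * g y))"
    by (simp only: plus_ereal.simps(1)[symmetric] ac_simps)
  also have "\<dots> = ereal (1 - t) * (f x + ereal (g x)) + ereal t * (f y + ereal (g y))"
    by (simp only: distrib)
  finally show "f ?z + ereal (g ?z) \<le> ereal (1 - t) * (f x + ereal (g x)) + ereal t * (f y + ereal (g y))" .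
qed

lemma convex_fun_INF_attained:
  fixes H :: "('a::real_vector \<times> 'b::real_vector) \<Rightarrow> ereal"
  assumes cvx: "convex_fun H" and attains: "\<And>z. \<exists>q. (INF q'. H (z, q')) = H (z, q)"
  shows "convex_fun (\<lambda>z. INF q. H (z, q))"
  unfolding convex_fun_def
proof (intro allI impI)
  fix z1 z2 and t :: real
  assume t: "0 \<le> t \<and> t \<le> 1"
  obtain q1 q2 where q1: "(INF q. H (z1, q)) = H (z1, q1)" and q2: "(INF q. H (z2, q)) = H (z2, q2)"
    using attains by metis
  have "(INF q. H ((1 - t) *\<^sub>R z1 + t *\<^sub>R z2, q)) \<le> H ((1 - t) *\<^sub>R z1 + t *\<^sub>R z2, (1 - t) *\<^sub>R q1 + t *\<^sub>R q2)"
    by (rule INF_lower) simp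
  also have "\<dots> = H ((1 - t) *\<^sub>R (z1, q1) + t *\<^sub>R (z2, q2))" by simp
  also have "\<dots> \<le> ereal (1 - t) * H (z1, q1) + ereal t * H (z2, q2)"
    using convex_funD[OF cvx] t by blast
  finally show "(INF q. H ((1 - t) *\<^sub>R z1 + t *\<^sub>R z2, q))
      \<le> ereal (1 - t) * (INF q. H (z1, q)) + ereal t * (INF q. H (z2, q))"
    unfolding q1 q2 .
qed

lemma convex_on_norm_square_linear:
  assumes "linear g"
  shows "convex_on UNIV (\<lambda>x. (norm (g x))\<^sup>2)"
proof (rule convex_onI)
  fix t :: real and x y
  assume t: "0 < t" "t < 1"
  have "norm (g ((1 - t) *\<^sub>R x + t *\<^sub>R y)) \<le> (1 - t) * norm (g x) + t * norm (g y)"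
    using assms t by (simp add: linear_add linear_scale norm_triangle_le)
  then have "(norm (g ((1 - t) *\<^sub>R x + t *\<^sub>R y)))\<^sup>2 \<le> ((1 - t) * norm (g x) + t * norm (g y))\<^sup>2"
    by (simp add: power_mono)
  also have "\<dots> \<le> (1 - t) * (norm (g x))\<^sup>2 + t * (norm (g y))\<^sup>2"
    using convex_onD[OF convex_power2, of t "norm (g x)" "norm (g y)"] t by simp
  finally show "(norm (g ((1 - t) *\<^sub>R x + t *\<^sub>R y)))\<^sup>2 \<le> (1 - t) * (norm (g x))\<^sup>2 + t * (norm (g y))\<^sup>2" .
qed simp

lemma has_derivative_of_midpoint_convex_quadratic_majorant:
  fixes \<phi> :: "'a::real_normed_vector \<Rightarrow> real"
  assumes D: "bounded_linear D"
    and majorant: "\<And>k. \<phi> (p + k) \<le> \<phi> p + D k + C * (norm k)\<^sup>2"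
    and midpoint: "\<And>k. 2 * \<phi> p \<le> \<phi> (p + k) + \<phi> (p - k)"
  shows "(\<phi> has_derivative D) (at p)"
proof -
  \<comment> \<open>Midpoint convexity turns the majorant at \<open>p - k\<close> into a matching minorant at \<open>p + k\<close>.\<close>
  have remainder: "\<bar>\<phi> x - \<phi> p - D (x - p)\<bar> \<le> C * norm (x - p) * norm (x - p)" for x
  proof -
    have "\<phi> (p + (p - x)) \<le> \<phi> p + D (p - x) + C * (norm (p - x))\<^sup>2" by (rule majorant)
    then have "\<phi> (p - (x - p)) \<le> \<phi> p - D (x - p) + C * (norm (x - p))\<^sup>2"
      using linear_diff[OF bounded_linear.linear[OF D]] by (simp add: norm_minus_commute diff_diff_eq2 add_diff_eq)
    moreover have "\<phi> x \<le> \<phi> p + D (x - p) + C * (norm (x - p))\<^sup>2"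
      using majorant[of "x - p"] by simp
    moreover have "2 * \<phi> p \<le> \<phi> x + \<phi> (p - (x - p))"
      using midpoint[of "x - p"] by simp
    ultimately show ?thesis by (simp add: abs_le_iff power2_eq_square mult.assoc)
  qed
  have bound: "\<forall>x. norm (norm (\<phi> x - \<phi> p - D (x - p)) / norm (x - p)) \<le> C * norm (x - p)"
  proof
    fix x
    show "norm (norm (\<phi> x - \<phi> p - D (x - p)) / norm (x - p)) \<le> C * norm (x - p)"
    proof (cases "x = p")
      case False
      then show ?thesis using remainder[of x] by (simp add: pos_divide_le_eq)
    qed simp
  qed
  have "((\<lambda>x. C * norm (x - p)) \<longlongrightarrow> C * norm (p - p)) (at p)"
    by (intro tendsto_intros)
  then have "((\<lambda>x. C * norm (x - p)) \<longlongrightarrow> 0) (at p)" by simp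
  then have "((\<lambda>x. norm (\<phi> x - \<phi> p - D (x - p)) / norm (x - p)) \<longlongrightarrow> 0) (at p)"
    by (rule Lim_null_comparison[OF always_eventually[OF bound]])
  with D show ?thesis by (simp add: has_derivative_iff_norm)
qed

lemma moreau_le: "moreau \<mu> f p \<le> f q + ereal ((norm (p - q))\<^sup>2 / (2 * \<mu>))"
  unfolding moreau_def by (rule INF_lower) simp

lemma moreau_eq_top_iff: "moreau \<mu> f p = \<infinity> \<longleftrightarrow> (\<forall>q. f q = \<infinity>)"
proof
  assume top: "moreau \<mu> f p = \<infinity>"
  show "\<forall>q. f q = \<infinity>"
  proof
    fix q
    have "\<infinity> \<le> f q + ereal ((norm (p - q))\<^sup>2 / (2 * \<mu>))"
      using moreau_le[of \<mu> f p q] top by simp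
    then show "f q = \<infinity>" by (cases "f q") auto
  qed
qed (simp add: moreau_def)

lemma moreau_has_derivative:
  fixes f :: "'p::euclidean_space \<Rightarrow> ereal"
  assumes mu: "\<mu> > 0"
    and prox: "moreau \<mu> f p = f q + ereal ((norm (p - q))\<^sup>2 / (2 * \<mu>))"
    and finite: "\<And>p. \<bar>moreau \<mu> f p\<bar> \<noteq> \<infinity>"
    and convex: "convex_fun (moreau \<mu> f)"
  shows "((\<lambda>p. real_of_ereal (moreau \<mu> f p)) has_derivative (\<lambda>k. ((p - q) \<bullet> k) / \<mu>)) (at p)"
proof -
  define \<phi> where "\<phi> p = real_of_ereal (moreau \<mu> f p)" for p
  have moreau_\<phi>: "moreau \<mu> f p = ereal (\<phi> p)" for p
    using finite[of p] unfolding \<phi>_def by (cases "moreau \<mu> f p") auto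
  have fq: "f q = ereal (\<phi> p - (norm (p - q))\<^sup>2 / (2 * \<mu>))"
    using prox unfolding moreau_\<phi> by (cases "f q") auto
  have "\<phi> (p + k) \<le> \<phi> p + ((p - q) \<bullet> k) / \<mu> + 1 / (2 * \<mu>) * (norm k)\<^sup>2" for k
  proof -
    have shift: "p + k - q = (p - q) + k" by (simp add: algebra_simps)
    have "\<phi> (p + k) \<le> \<phi> p - (norm (p - q))\<^sup>2 / (2 * \<mu>) + (norm ((p - q) + k))\<^sup>2 / (2 * \<mu>)"
      using moreau_le[of \<mu> f "p + k" q] unfolding moreau_\<phi> fq shift by simp
    moreover have "(p - q) \<bullet> k = ((norm ((p - q) + k))\<^sup>2 - (norm (p - q))\<^sup>2 - (norm k)\<^sup>2) / 2"
      by (rule dot_norm)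
    ultimately show ?thesis using mu by (simp add: field_simps)
  qed
  moreover have "2 * \<phi> p \<le> \<phi> (p + k) + \<phi> (p - k)" for k
  proof -
    have "moreau \<mu> f ((1 - 1/2) *\<^sub>R (p + k) + (1/2) *\<^sub>R (p - k))
        \<le> ereal (1 - 1/2) * moreau \<mu> f (p + k) + ereal (1/2) * moreau \<mu> f (p - k)"
      by (rule convex_funD[OF convex]) simp_all
    moreover have "(1 - 1/2) *\<^sub>R (p + k) + (1/2) *\<^sub>R (p - k) = p"
      by (simp add: algebra_simps scaleR_left_distrib[symmetric])
    ultimately show ?thesis unfolding moreau_\<phi> by simp
  qed
  moreover have "bounded_linear (\<lambda>k. ((p - q) \<bullet> k) / \<mu>)"
    by (rule bounded_linear_compose[OF bounded_linear_divide bounded_linear_inner_right])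
  ultimately show ?thesis
    unfolding \<phi>_def[symmetric] by (intro has_derivative_of_midpoint_convex_quadratic_majorant)
qed

definition moreau_objective ::
    "real \<Rightarrow> ('y::euclidean_space \<times> 'p::euclidean_space \<Rightarrow> ereal) \<Rightarrow> ('y \<times> 'p) \<times> 'p \<Rightarrow> ereal" where
  "moreau_objective \<mu> F = (\<lambda>w. F (fst (fst w), snd w) + ereal ((norm (snd (fst w) - snd w))\<^sup>2 / (2 * \<mu>)))"

lemma moreau_eq_INF_objective: "moreau \<mu> (\<lambda>q. F (y, q)) p = (INF q. moreau_objective \<mu> F ((y, p), q))"
  by (simp add: moreau_def moreau_objective_def)

lemma Gamma_setD:
  assumes "F \<in> Gamma_set"
  shows Gamma_set_not_MInfty: "F z \<noteq> -\<infinity>" and Gamma_set_lsc: "lsc_fun F"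
    and Gamma_set_convex: "convex_fun F"
  using assms by (cases z; simp add: Gamma_set_def)+

lemma lsc_fun_moreau_objective:
  assumes "F \<in> Gamma_set"
  shows "lsc_fun (moreau_objective \<mu> F)"
proof -
  have "lsc_fun (\<lambda>w. F (fst (fst w), snd w))"
    using Gamma_set_lsc[OF assms] by (rule lsc_fun_comp_continuous) (intro continuous_intros)
  then show ?thesis
    unfolding moreau_objective_def
    by (rule lsc_fun_add_continuous) (rule Gamma_set_not_MInfty[OF assms], unfold divide_inverse, intro continuous_intros)
qed

lemma convex_fun_moreau_objective:
  assumes "F \<in> Gamma_set" and "\<mu> > 0"
  shows "convex_fun (moreau_objective \<mu> F)"
  unfolding moreau_objective_def
proof (rule convex_fun_add_convex_on)
  show "convex_fun (\<lambda>w. F (fst (fst w), snd w))"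
    using Gamma_set_convex[OF assms(1)] by (rule convex_fun_comp_linear) (simp add: linear_iff)
  show "convex_on UNIV (\<lambda>w. (norm (snd (fst w) - snd w))\<^sup>2 / (2 * \<mu>))"
    using assms(2) by (intro convex_on_cdiv convex_on_norm_square_linear) (simp_all add: linear_iff algebra_simps)
qed

lemma moreau_objective_attains_INF:
  assumes F: "F \<in> Gamma_set" and P: "compact P" "P \<noteq> {}" and dom: "\<And>y. edom (\<lambda>q. F (y, q)) \<subseteq> P"
  shows "\<exists>q\<in>P. (INF q'. moreau_objective \<mu> F (z, q')) = moreau_objective \<mu> F (z, q)"
proof (rule lsc_fun_attains_INF[OF _ P])
  show "lsc_fun (\<lambda>q. moreau_objective \<mu> F (z, q))"
    using lsc_fun_moreau_objective[OF F] by (rule lsc_fun_comp_continuous) (intro continuous_intros)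
  have "F (fst z, q) < \<infinity>" if "moreau_objective \<mu> F (z, q) < \<infinity>" for q
    using that by (auto simp: moreau_objective_def)
  then show "edom (\<lambda>q. moreau_objective \<mu> F (z, q)) \<subseteq> P"
    using dom[of "fst z"] by (auto simp: edom_def)
qed

lemma moreau_Theta:
  fixes F :: "'y::euclidean_space \<times> 'p::euclidean_space \<Rightarrow> ereal"
  assumes F: "F \<in> Gamma_set" and P: "compact P" and dom: "\<And>y. edom (\<lambda>q. F (y, q)) \<subseteq> P"
    and mu: "\<mu> > 0"
  shows "(\<lambda>(y, p). moreau \<mu> (\<lambda>q. F (y, q)) p) \<in> Theta_set UNIV"
proof -
  let ?G = "\<lambda>(y, p). moreau \<mu> (\<lambda>q. F (y, q)) p"
  have G_INF: "?G = (\<lambda>z. INF q. moreau_objective \<mu> F (z, q))"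
    by (auto simp: fun_eq_iff moreau_eq_INF_objective)
  \<comment> \<open>\<open>P\<close> may be empty, so the minimiser is sought in the nonempty compact set \<open>insert 0 P\<close>.\<close>
  have attains: "\<exists>q\<in>insert 0 P. (INF q'. moreau_objective \<mu> F (z, q')) = moreau_objective \<mu> F (z, q)" for z
    using P dom by (intro moreau_objective_attains_INF[OF F]) auto
  have not_MInfty: "?G z \<noteq> -\<infinity>" for z
    using attains[of z] Gamma_set_not_MInfty[OF F] by (auto simp: G_INF moreau_objective_def)
  have convex: "convex_fun ?G"
    unfolding G_INF
    by (rule convex_fun_INF_attained[OF convex_fun_moreau_objective[OF F mu]]) (use attains in blast)
  have lsc: "lsc_fun ?G"
    unfolding G_INF using lsc_fun_moreau_objective[OF F] compact_insert[OF P] attains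
    by (rule lsc_fun_INF_attained)
  define Y where "Y = {y. \<exists>q. F (y, q) < \<infinity>}"
  have edom: "edom ?G = Y \<times> UNIV"
    by (auto simp: edom_def Y_def moreau_eq_top_iff)
  have "(\<lambda>p. real_of_ereal (?G (y, p))) differentiable (at p)" if "y \<in> Y" for y p
  proof -
    obtain q where "(INF q'. moreau_objective \<mu> F ((y, p), q')) = moreau_objective \<mu> F ((y, p), q)"
      using attains by blast
    then have "moreau \<mu> (\<lambda>q. F (y, q)) p = F (y, q) + ereal ((norm (p - q))\<^sup>2 / (2 * \<mu>))"
      unfolding moreau_eq_INF_objective by (simp add: moreau_objective_def)
    moreover have "\<bar>moreau \<mu> (\<lambda>q. F (y, q)) p'\<bar> \<noteq> \<infinity>" for p'
      using that not_MInfty[of "(y, p')"] by (auto simp: Y_def moreau_eq_top_iff)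
    moreover have "convex_fun (moreau \<mu> (\<lambda>q. F (y, q)))"
      using convex_fun_slice[OF convex, of y] by simp
    ultimately have "((\<lambda>p. real_of_ereal (moreau \<mu> (\<lambda>q. F (y, q)) p)) has_derivative (\<lambda>k. ((p - q) \<bullet> k) / \<mu>)) (at p)"
      by (rule moreau_has_derivative[OF mu])
    then show ?thesis unfolding differentiable_def by auto
  qed
  then show ?thesis
    using not_MInfty lsc convex edom unfolding Theta_set_def Gamma_set_def by auto
qed

lemma moreau_ThetaK:
  fixes F :: "('x::euclidean_space \<times> 'u::euclidean_space) \<times> 'p::euclidean_space \<Rightarrow> ereal"
  assumes F: "F \<in> GammaK_set" and P: "compact P" and dom: "\<And>y. edom (\<lambda>q. F (y, q)) \<subseteq> P"
    and mu: "\<mu> > 0"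
  shows "(\<lambda>(y, p). moreau \<mu> (\<lambda>q. F (y, q)) p) \<in> ThetaK_set UNIV"
proof -
  obtain K where K: "compact K" "\<And>x p. {u. F ((x, u), p) < \<infinity>} \<subseteq> K"
    using F by (auto simp: GammaK_set_def)
  have "{u. moreau \<mu> (\<lambda>q. F ((x, u), q)) p < \<infinity>} \<subseteq> K" for x p
  proof
    fix u assume "u \<in> {u. moreau \<mu> (\<lambda>q. F ((x, u), q)) p < \<infinity>}"
    then obtain q where "F ((x, u), q) < \<infinity>" by (auto simp: moreau_eq_top_iff)
    with K(2) show "u \<in> K" by blast
  qed
  moreover have "(\<lambda>(y, p). moreau \<mu> (\<lambda>q. F (y, q)) p) \<in> Theta_set UNIV"
    using F P dom mu by (intro moreau_Theta) (auto simp: GammaK_set_def)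
  ultimately show ?thesis
    using K(1) unfolding ThetaK_set_def GammaK_set_def Theta_set_def by auto
qed

theorem lemma1:
  fixes T :: nat and \<mu> :: real
    and M :: "'s measure"
    and W :: "nat \<Rightarrow> 's \<Rightarrow> 'w::euclidean_space"
    and L :: "nat \<Rightarrow> 'x::euclidean_space \<Rightarrow> 'u::euclidean_space \<Rightarrow> 'w \<Rightarrow> 'p::euclidean_space \<Rightarrow> ereal"
    and K :: "'x \<Rightarrow> 'p \<Rightarrow> ereal"
    and P :: "'p set"
  assumes T: "T \<ge> 1"
    and mu: "\<mu> > 0"
    and L_ninf: "\<And>t x u w p. L t x u w p \<noteq> -\<infinity>"
    and K_ninf: "\<And>x p. K x p \<noteq> -\<infinity>"
    and M: "prob_space M"
    and indep: "prob_space.indep_vars M (\<lambda>_. borel) W {1..T}"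
    and fin_supp: "\<And>t. t \<in> {1..T} \<Longrightarrow> finite (Supp M (W t))
                     \<and> measure M {\<omega> \<in> space M. W t \<omega> \<in> Supp M (W t)} = 1"
    and P: "compact P"
    and domL: "\<And>t w x u. t < T \<Longrightarrow> w \<in> Supp M (W (t + 1)) \<Longrightarrow> edom (L t x u w) \<subseteq> P"
    and domK: "\<And>x. edom (K x) \<subseteq> P"
  shows "(\<forall>t < T. \<forall>w \<in> Supp M (W (t + 1)).
            (\<lambda>((x, u), p). L t x u w p) \<in> GammaK_set \<longrightarrow>
            (\<lambda>((x, u), p). moreau \<mu> (L t x u w) p) \<in> ThetaK_set UNIV)
       \<and> ((\<lambda>(x, p). K x p) \<in> Gamma_set \<longrightarrow>
            (\<lambda>(x, p). moreau \<mu> (K x) p) \<in> Theta_set UNIV)"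
proof (intro conjI allI impI ballI)
  fix t w
  assume t: "t < T" and w: "w \<in> Supp M (W (t + 1))" and L: "(\<lambda>((x, u), p). L t x u w p) \<in> GammaK_set"
  have "(\<lambda>(y, p). moreau \<mu> (\<lambda>q. (\<lambda>((x, u), p). L t x u w p) (y, q)) p) \<in> ThetaK_set UNIV"
    using domL[OF t w] by (intro moreau_ThetaK[OF L P _ mu]) (auto simp: case_prod_beta)
  moreover have "(\<lambda>(y, p). moreau \<mu> (\<lambda>q. (\<lambda>((x, u), p). L t x u w p) (y, q)) p)
      = (\<lambda>((x, u), p). moreau \<mu> (L t x u w) p)"
    by (auto simp: fun_eq_iff)
  ultimately show "(\<lambda>((x, u), p). moreau \<mu> (L t x u w) p) \<in> ThetaK_set UNIV" by simp
next
  assume "(\<lambda>(x, p). K x p) \<in> Gamma_set"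
  from moreau_Theta[OF this P _ mu] domK
  show "(\<lambda>(x, p). moreau \<mu> (K x) p) \<in> Theta_set UNIV" by simp
qed

end
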